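(* Let $(\Sigma,E)$ be an algebraic theory with free monad $(T,\eta,\mu)$. For every $T$-semialgebra $\alpha:TX\to X$ and every operation symbol $(\mathsf{op}:n)\in\Sigma$, we have $\alpha\circ\mathsf{op}^{TX}=\alpha\circ\mathsf{op}^{TX}\circ(\eta_X)^n\circ\alpha^n$ as maps $(TX)^n\to X$.
   Context: The free monad $T=T_{\Sigma,E}$ sends a set $X$ to the set $TX$ of $\Sigma$-terms over $X$ modulo the smallest congruence containing all substitution instances of equations of $E$ (class of $t$ written $\overline{t}$); $TX$ is a $(\Sigma,E)$-algebra with $\mathsf{op}^{TX}(\overline{t_1},\dots,\overline{t_n})=\overline{\mathsf{op}(t_1,\dots,t_n)}$; $\eta_X(x)=\overline{x}$; $\mu_X$ flattens terms, $\overline{t[\overline{t_i}/v_i]}\mapsto\overline{t[t_i/v_i]}$. A $T$-semialgebra is a map $\alpha:TX\to X$ with $\alpha\circ\mu_X=\alpha\circ T\alpha$ (the unit law $\alpha\circ\eta_X=\mathrm{id}$ is not required). *)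

theory Defs
  imports Main
begin

text \<open>Signature: operation symbols are the elements of type 'f, with arity ar.
  Terms over variables 'v.\<close>

datatype ('f,'v) trm = Var 'v | Op 'f "('f,'v) trm list"

primrec subst :: "('v \<Rightarrow> ('f,'w) trm) \<Rightarrow> ('f,'v) trm \<Rightarrow> ('f,'w) trm" where
  "subst \<sigma> (Var v) = \<sigma> v"
| "subst \<sigma> (Op f ts) = Op f (map (subst \<sigma>) ts)"

inductive wf :: "('f \<Rightarrow> nat) \<Rightarrow> ('f,'v) trm \<Rightarrow> bool" for ar where
  wf_Var: "wf ar (Var v)"
| wf_Op: "length ts = ar f \<Longrightarrow> (\<forall>t\<in>set ts. wf ar t) \<Longrightarrow> wf ar (Op f ts)"

definition algebraic_theory :: "('f \<Rightarrow> nat) \<Rightarrow> (('f,'v) trm \<times> ('f,'v) trm) set \<Rightarrow> bool" where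
  "algebraic_theory ar E \<longleftrightarrow> (\<forall>(l,r)\<in>E. wf ar l \<and> wf ar r)"

fun vars :: "('f,'v) trm \<Rightarrow> 'v set" where
  "vars (Var v) = {v}"
| "vars (Op f ts) = (\<Union>t\<in>set ts. vars t)"

definition wfV :: "('f \<Rightarrow> nat) \<Rightarrow> 'x set \<Rightarrow> ('f,'x) trm \<Rightarrow> bool" where
  "wfV ar V t \<longleftrightarrow> wf ar t \<and> vars t \<subseteq> V"

inductive econg :: "('f \<Rightarrow> nat) \<Rightarrow> (('f,'v) trm \<times> ('f,'v) trm) set \<Rightarrow> 'x set
    \<Rightarrow> ('f,'x) trm \<Rightarrow> ('f,'x) trm \<Rightarrow> bool" for ar E V where
  ec_refl: "wfV ar V t \<Longrightarrow> econg ar E V t t"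
| ec_sym: "econg ar E V s t \<Longrightarrow> econg ar E V t s"
| ec_trans: "econg ar E V s t \<Longrightarrow> econg ar E V t u \<Longrightarrow> econg ar E V s u"
| ec_op: "length ss = ar f \<Longrightarrow> list_all2 (econg ar E V) ss ts \<Longrightarrow> econg ar E V (Op f ss) (Op f ts)"
| ec_eq: "(l,r) \<in> E \<Longrightarrow> (\<forall>v. wfV ar V (\<sigma> v)) \<Longrightarrow> econg ar E V (subst \<sigma> l) (subst \<sigma> r)"

definition econg_rel :: "('f \<Rightarrow> nat) \<Rightarrow> (('f,'v) trm \<times> ('f,'v) trm) set \<Rightarrow> 'x set \<Rightarrow> (('f,'x) trm \<times> ('f,'x) trm) set" where
  "econg_rel ar E V = {(s,t). econg ar E V s t}"

text \<open>T V for a set V: the set of congruence classes of Sigma-terms over V.\<close>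
definition Ton :: "('f \<Rightarrow> nat) \<Rightarrow> (('f,'v) trm \<times> ('f,'v) trm) set \<Rightarrow> 'x set \<Rightarrow> ('f,'x) trm set set" where
  "Ton ar E V = {t. wfV ar V t} // econg_rel ar E V"

definition TX :: "('f \<Rightarrow> nat) \<Rightarrow> (('f,'v) trm \<times> ('f,'v) trm) set \<Rightarrow> ('f,'x) trm set set" where
  "TX ar E = Ton ar E UNIV"

definition cls :: "('f \<Rightarrow> nat) \<Rightarrow> (('f,'v) trm \<times> ('f,'v) trm) set \<Rightarrow> ('f,'x) trm \<Rightarrow> ('f,'x) trm set" where
  "cls ar E t = econg_rel ar E UNIV `` {t}"

definition rep :: "'a set \<Rightarrow> 'a" where
  "rep C = (SOME t. t \<in> C)"

definition eta :: "('f \<Rightarrow> nat) \<Rightarrow> (('f,'v) trm \<times> ('f,'v) trm) set \<Rightarrow> 'x \<Rightarrow> ('f,'x) trm set" where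
  "eta ar E x = cls ar E (Var x)"

definition mu :: "('f \<Rightarrow> nat) \<Rightarrow> (('f,'v) trm \<times> ('f,'v) trm) set
    \<Rightarrow> ('f, ('f,'x) trm set) trm set \<Rightarrow> ('f,'x) trm set" where
  "mu ar E C = cls ar E (subst rep (rep C))"

definition Tmap :: "('f \<Rightarrow> nat) \<Rightarrow> (('f,'v) trm \<times> ('f,'v) trm) set
    \<Rightarrow> ('a \<Rightarrow> 'b) \<Rightarrow> ('f,'a) trm set \<Rightarrow> ('f,'b) trm set" where
  "Tmap ar E h C = cls ar E (subst (Var \<circ> h) (rep C))"

definition opT :: "('f \<Rightarrow> nat) \<Rightarrow> (('f,'v) trm \<times> ('f,'v) trm) set
    \<Rightarrow> 'f \<Rightarrow> ('f,'x) trm set list \<Rightarrow> ('f,'x) trm set" where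
  "opT ar E f Cs = cls ar E (Op f (map rep Cs))"

text \<open>T-semialgebra: alpha o mu = alpha o T alpha on T(TX) (no unit law); T(TX) = classes of terms over the set TX.\<close>
definition semialgebra :: "('f \<Rightarrow> nat) \<Rightarrow> (('f,'v) trm \<times> ('f,'v) trm) set
    \<Rightarrow> (('f,'x) trm set \<Rightarrow> 'x) \<Rightarrow> bool" where
  "semialgebra ar E \<alpha> \<longleftrightarrow>
     (\<forall>C \<in> Ton ar E (TX ar E). \<alpha> (mu ar E C) = \<alpha> (Tmap ar E \<alpha> C))"

end

theory Submission
  imports Defs
begin

text \<open>View the list of classes \<open>Cs\<close> as variables of the term \<open>Op f (map Var Cs)\<close> over the
  set \<open>TX\<close>, and let \<open>K\<close> be its class in \<open>T(TX)\<close>. Flattening \<open>K\<close> gives \<open>op\<^sup>T\<^sup>X Cs\<close>, while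
  applying \<open>T\<alpha>\<close> to \<open>K\<close> replaces each variable \<open>C\<close> by \<open>\<alpha> C\<close>, giving \<open>op\<^sup>T\<^sup>X (\<eta> (\<alpha> C\<^sub>1), \<dots>)\<close>.
  The semialgebra law \<open>\<alpha> \<circ> \<mu> = \<alpha> \<circ> T\<alpha>\<close> at \<open>K\<close> is the claim.\<close>

lemma subst_subst: "subst \<tau> (subst \<sigma> t) = subst (subst \<tau> \<circ> \<sigma>) t"
  by (induction t) auto

lemma wfV_subst:
  assumes "wfV ar V t" "\<forall>v\<in>V. wfV ar W (\<tau> v)"
  shows "wfV ar W (subst \<tau> t)"
proof -
  have "wf ar t \<Longrightarrow> vars t \<subseteq> V \<Longrightarrow> wfV ar W (subst \<tau> t)"
  proof (induction t rule: wf.induct)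
    case (wf_Op ts f)
    then have "\<forall>t\<in>set ts. wfV ar W (subst \<tau> t)" by auto
    with wf_Op(1) show ?case by (auto simp: wfV_def intro!: wf.wf_Op)
  qed (use assms(2) in auto)
  then show ?thesis using assms(1) by (simp add: wfV_def)
qed

lemma wfV_Op_Var:
  assumes "length xs = ar f" "set xs \<subseteq> V"
  shows "wfV ar V (Op f (map Var xs))"
  using assms by (auto simp: wfV_def intro!: wf.wf_Op wf.wf_Var)

lemma econg_imp_wfV:
  assumes "algebraic_theory ar E" "econg ar E V s t"
  shows "wfV ar V s \<and> wfV ar V t"
  using assms(2)
proof (induction rule: econg.induct)
  case (ec_op ss f ts)
  then have "length ts = ar f" by (simp add: list_all2_lengthD)
  with ec_op show ?case
    by (auto simp: wfV_def list_all2_conv_all_nth in_set_conv_nth intro!: wf.wf_Op) blast+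
next
  case (ec_eq l r \<sigma>)
  then have "wfV ar UNIV l" "wfV ar UNIV r"
    using assms(1) by (auto simp: algebraic_theory_def wfV_def)
  then show ?case using ec_eq(2) wfV_subst by blast
qed auto

lemma econg_subst:
  assumes "econg ar E V s t" "\<forall>v\<in>V. wfV ar W (\<tau> v)"
  shows "econg ar E W (subst \<tau> s) (subst \<tau> t)"
  using assms(1)
proof (induction rule: econg.induct)
  case (ec_refl t)
  then show ?case using assms(2) by (blast intro: econg.ec_refl wfV_subst)
next
  case (ec_op ss f ts)
  then show ?case
    by (auto intro!: econg.ec_op simp: list_all2_map1 list_all2_map2 elim: list_all2_mono)
next
  case (ec_eq l r \<sigma>)
  have "\<forall>v. wfV ar W ((subst \<tau> \<circ> \<sigma>) v)"
    using ec_eq(2) assms(2) by (auto intro: wfV_subst)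
  then show ?case
    using econg.ec_eq[OF ec_eq(1)] by (simp only: subst_subst)
qed (blast intro: econg.intros)+

lemma equiv_econg_rel:
  assumes "algebraic_theory ar E"
  shows "equiv {t. wfV ar V t} (econg_rel ar E V)"
proof (rule equivI)
  show "econg_rel ar E V \<subseteq> {t. wfV ar V t} \<times> {t. wfV ar V t}"
    using econg_imp_wfV[OF assms] by (auto simp: econg_rel_def)
  show "refl_on {t. wfV ar V t} (econg_rel ar E V)"
    by (auto simp: refl_on_def econg_rel_def intro: econg.ec_refl)
  show "sym (econg_rel ar E V)"
    by (auto simp: sym_def econg_rel_def intro: econg.ec_sym)
  show "trans (econg_rel ar E V)"
    by (auto simp: trans_def econg_rel_def intro: econg.ec_trans)
qed

lemma rep_in_quotient: "equiv A r \<Longrightarrow> X \<in> A // r \<Longrightarrow> rep X \<in> X"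
  unfolding rep_def using in_quotient_imp_non_empty some_in_eq by metis

lemma econg_rep_class:
  assumes "algebraic_theory ar E" "wfV ar V t"
  shows "econg ar E V t (rep (econg_rel ar E V `` {t}))"
proof -
  have "rep (econg_rel ar E V `` {t}) \<in> econg_rel ar E V `` {t}"
    using rep_in_quotient[OF equiv_econg_rel[OF assms(1)] quotientI] assms(2) by simp
  then show ?thesis by (simp add: econg_rel_def)
qed

lemma wfV_rep_TX:
  assumes "algebraic_theory ar E" "C \<in> TX ar E"
  shows "wfV ar UNIV (rep C)"
proof -
  have "equiv {t. wfV ar UNIV t} (econg_rel ar E UNIV)"
    using assms(1) by (rule equiv_econg_rel)
  then show ?thesis
    using assms(2) rep_in_quotient in_quotient_imp_subset unfolding TX_def Ton_def by blast
qed

lemma cls_eq: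
  assumes "algebraic_theory ar E" "econg ar E UNIV s t"
  shows "cls ar E s = cls ar E t"
  using equiv_class_eq[OF equiv_econg_rel[OF assms(1)]] assms(2)
  by (simp add: cls_def econg_rel_def)

lemma mu_class:
  assumes "algebraic_theory ar E" "wfV ar (TX ar E) t"
  shows "mu ar E (econg_rel ar E (TX ar E) `` {t}) = cls ar E (subst rep t)"
proof -
  have "\<forall>C\<in>TX ar E. wfV ar UNIV (rep C)"
    using wfV_rep_TX[OF assms(1)] by blast
  then have "econg ar E UNIV (subst rep t) (subst rep (rep (econg_rel ar E (TX ar E) `` {t})))"
    using econg_subst econg_rep_class[OF assms] by blast
  then show ?thesis
    unfolding mu_def using cls_eq[OF assms(1)] by (metis econg.ec_sym)
qed

lemma Tmap_class:
  assumes "algebraic_theory ar E" "wfV ar V t"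
  shows "Tmap ar E h (econg_rel ar E V `` {t}) = cls ar E (subst (Var \<circ> h) t)"
proof -
  have "\<forall>v\<in>V. wfV ar UNIV ((Var \<circ> h) v)"
    by (auto simp: wfV_def intro: wf.wf_Var)
  then have "econg ar E UNIV (subst (Var \<circ> h) t) (subst (Var \<circ> h) (rep (econg_rel ar E V `` {t})))"
    using econg_subst econg_rep_class[OF assms] by blast
  then show ?thesis
    unfolding Tmap_def using cls_eq[OF assms(1)] by (metis econg.ec_sym)
qed

lemma opT_eta:
  assumes "algebraic_theory ar E" "length xs = ar f"
  shows "opT ar E f (map (eta ar E) xs) = cls ar E (Op f (map Var xs))"
proof -
  have "econg ar E UNIV (Var x) (rep (eta ar E x))" for x
    using econg_rep_class[OF assms(1), of UNIV "Var x"]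
    by (simp add: eta_def cls_def wfV_def wf.wf_Var)
  then have "econg ar E UNIV (Op f (map Var xs)) (Op f (map rep (map (eta ar E) xs)))"
    using assms(2) by (auto intro!: econg.ec_op list_all2_refl simp: list_all2_map1 list_all2_map2)
  then show ?thesis
    unfolding opT_def using cls_eq[OF assms(1)] by (metis econg.ec_sym)
qed

theorem lemma8:
  fixes ar :: "'f \<Rightarrow> nat"
    and E :: "(('f,'v) trm \<times> ('f,'v) trm) set"
    and \<alpha> :: "('f,'x) trm set \<Rightarrow> 'x"
  assumes "algebraic_theory ar E"
    and "semialgebra ar E \<alpha>"
    and "length Cs = ar f"
    and "set Cs \<subseteq> TX ar E"
  shows "\<alpha> (opT ar E f Cs) = \<alpha> (opT ar E f (map (eta ar E \<circ> \<alpha>) Cs))"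
proof -
  define K where "K = econg_rel ar E (TX ar E) `` {Op f (map Var Cs)}"
  have wf_t: "wfV ar (TX ar E) (Op f (map Var Cs))"
    using assms(3,4) by (rule wfV_Op_Var)
  then have "K \<in> Ton ar E (TX ar E)"
    unfolding K_def Ton_def by (blast intro: quotientI)
  moreover have "mu ar E K = opT ar E f Cs"
    unfolding K_def mu_class[OF assms(1) wf_t] by (simp add: opT_def comp_def)
  moreover have "Tmap ar E \<alpha> K = opT ar E f (map (eta ar E \<circ> \<alpha>) Cs)"
    unfolding K_def Tmap_class[OF assms(1) wf_t]
    using opT_eta[OF assms(1), of "map \<alpha> Cs" f] assms(3) by (simp add: comp_def)
  ultimately show ?thesis
    using assms(2) unfolding semialgebra_def by metis
qed

end
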